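(* Let $F\in\mathbb{C}[x]$ be a polynomial of degree $n\ge 2$, and let $\Delta$ be a disk in $\mathbb{C}$ that is $(\frac{1}{16n},16n^4)$-isolating for a set of $k$ roots of $F$ (counted with multiplicity). Then $T_k(\Delta,\frac32,F)$ holds.
   Context: $\Delta(m,r)$ denotes the open disk with center $m$ and radius $r>0$, and $\lambda\cdot\Delta(m,r):=\Delta(m,\lambda r)$. For $0<\rho_1\le 1\le\rho_2$ and a set $S$ of roots of $F$ (counted with multiplicity), a disk $\Delta$ is $(\rho_1,\rho_2)$-isolating for $S$ if $\rho_1\cdot\Delta$ contains exactly the roots in $S$ (with multiplicity) and $\rho_2\cdot\Delta\setminus\rho_1\cdot\Delta$ contains no root of $F$. The predicate $T_k(\Delta(m,r),K,F)$ holds iff $\left|\frac{F^{(k)}(m) r^k}{k!}\right|>K\sum_{i\neq k,\,0\le i\le n}\left|\frac{F^{(i)}(m)r^i}{i!}\right|$. *)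

theory Defs
  imports "HOL-Analysis.Analysis" "HOL-Computational_Algebra.Polynomial"
begin

definition root_count :: "complex poly \<Rightarrow> complex set \<Rightarrow> nat" where
  "root_count F A = (\<Sum>z\<in>{z\<in>A. poly F z = 0}. order z F)"

text \<open>The open disk Delta(m, r) scaled by lambda is ball m (lambda * r).\<close>
definition isolating :: "real \<Rightarrow> real \<Rightarrow> complex poly \<Rightarrow> complex \<Rightarrow> real \<Rightarrow> nat \<Rightarrow> bool" where
  "isolating rho1 rho2 F m r k \<longleftrightarrow>
     root_count F (ball m (rho1 * r)) = k \<and>
     (\<forall>z \<in> ball m (rho2 * r) - ball m (rho1 * r). poly F z \<noteq> 0)"

definition T_test :: "nat \<Rightarrow> complex \<Rightarrow> real \<Rightarrow> real \<Rightarrow> complex poly \<Rightarrow> bool" where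
  "T_test k m r K F \<longleftrightarrow>
     norm (poly ((pderiv ^^ k) F) m * of_real (r ^ k) / of_nat (fact k))
       > K * (\<Sum>i\<in>{0..degree F} - {k}.
                norm (poly ((pderiv ^^ i) F) m * of_real (r ^ i) / of_nat (fact i)))"

end

theory Submission
  imports Defs "HOL-Computational_Algebra.Fundamental_Theorem_Algebra"
begin

text \<open>Substituting \<open>x := m + r x\<close> turns the Taylor coefficients in \<open>T_k\<close> into the coefficients of
  \<open>H(x) = F(m + r x)\<close>. With the normalised roots \<open>w = (z - m) / r\<close>, \<open>H\<close> is a constant \<open>C\<close> times the
  product of the factors \<open>x - w\<close> over the inner roots and \<open>1 - x / w\<close> over the outer roots. The \<open>k\<close>
  inner roots have \<open>|w| \<le> 1/(16n)\<close> and the outer ones \<open>|1/w| \<le> 1/(16n)\<close>, so in the \<open>l\<^sub>1\<close>-norm of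
  coefficients the first product lies within \<open>(1 + 1/(16n))^n - 1 \<le> 1/8\<close> of \<open>x^k\<close> and the second
  within \<open>1/8\<close> of \<open>1\<close>. Hence the \<open>k\<close>-th coefficient of \<open>H\<close> has modulus at least \<open>(1 - 1/64) |C|\<close>,
  while the other coefficients sum to at most \<open>(1/8 + 1/8 + 1/64) |C|\<close>.\<close>

definition l1_norm :: "'a::real_normed_field poly \<Rightarrow> real" where
  "l1_norm p = (\<Sum>i\<le>degree p. norm (coeff p i))"

lemma l1_norm_eq_sum_atMost: "degree p \<le> N \<Longrightarrow> l1_norm p = (\<Sum>i\<le>N. norm (coeff p i))"
  unfolding l1_norm_def by (rule sum.mono_neutral_left) (auto simp: coeff_eq_0)

lemma sum_norm_coeff_le_l1_norm:
  assumes "finite I" shows "(\<Sum>i\<in>I. norm (coeff p i)) \<le> l1_norm p"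
proof -
  have "(\<Sum>i\<in>I. norm (coeff p i)) = (\<Sum>i\<in>I \<inter> {..degree p}. norm (coeff p i))"
    using assms by (intro sum.mono_neutral_right) (auto intro: le_degree)
  also have "\<dots> \<le> l1_norm p"
    unfolding l1_norm_def by (intro sum_mono2) auto
  finally show ?thesis .
qed

lemma norm_coeff_le_l1_norm: "norm (coeff p i) \<le> l1_norm p"
  using sum_norm_coeff_le_l1_norm[of "{i}" p] by simp

lemma l1_norm_nonneg: "0 \<le> l1_norm p"
  unfolding l1_norm_def by (auto intro: sum_nonneg)

lemma l1_norm_0 [simp]: "l1_norm 0 = 0"
  by (simp add: l1_norm_def)

lemma l1_norm_1 [simp]: "l1_norm (1 :: 'a::real_normed_field poly) = 1"
  by (simp add: l1_norm_def)

lemma l1_norm_pCons: "l1_norm (pCons a p) = norm a + l1_norm p"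
proof -
  have "l1_norm (pCons a p) = (\<Sum>i\<le>Suc (degree p). norm (coeff (pCons a p) i))"
    by (rule l1_norm_eq_sum_atMost) (simp add: degree_pCons_le)
  also have "\<dots> = norm a + l1_norm p"
    by (subst sum.atMost_Suc_shift) (simp add: l1_norm_def)
  finally show ?thesis .
qed

lemma l1_norm_add_le: "l1_norm (p + q) \<le> l1_norm p + l1_norm q"
proof -
  let ?N = "max (degree p) (degree q)"
  have "l1_norm (p + q) = (\<Sum>i\<le>?N. norm (coeff (p + q) i))"
    by (rule l1_norm_eq_sum_atMost) (rule degree_add_le_max)
  also have "\<dots> \<le> (\<Sum>i\<le>?N. norm (coeff p i) + norm (coeff q i))"
    by (intro sum_mono) (simp add: norm_triangle_ineq)
  also have "\<dots> = l1_norm p + l1_norm q"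
    by (simp add: sum.distrib l1_norm_eq_sum_atMost[symmetric])
  finally show ?thesis .
qed

lemma l1_norm_smult: "l1_norm (smult c p) = norm c * l1_norm p"
  by (cases "c = 0") (simp_all add: l1_norm_def sum_distrib_left norm_mult)

lemma l1_norm_monom [simp]: "l1_norm (monom c n) = norm c"
proof -
  have "l1_norm (monom c n) = (\<Sum>i\<le>n. norm (coeff (monom c n) i))"
    by (rule l1_norm_eq_sum_atMost) (simp add: degree_monom_le)
  also have "\<dots> = (\<Sum>i\<le>n. if i = n then norm c else 0)"
    by (intro sum.cong) (auto simp: coeff_monom)
  finally show ?thesis
    by simp
qed

lemma l1_norm_mult_le: "l1_norm (p * q) \<le> l1_norm p * l1_norm q"
proof (induction p)
  case 0
  then show ?case by simp
next
  case (pCons a p)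
  have "l1_norm (pCons a p * q) \<le> l1_norm (smult a q) + l1_norm (pCons 0 (p * q))"
    using l1_norm_add_le by simp
  also have "\<dots> \<le> norm a * l1_norm q + l1_norm p * l1_norm q"
    using pCons.IH by (simp add: l1_norm_smult l1_norm_pCons)
  also have "\<dots> = l1_norm (pCons a p) * l1_norm q"
    by (simp add: l1_norm_pCons algebra_simps)
  finally show ?case .
qed

lemma l1_norm_prod_mset_le:
  assumes "\<forall>z\<in>#M. l1_norm (p z) \<le> a"
  shows "l1_norm (\<Prod>z\<in>#M. p z) \<le> a ^ size M"
  using assms
proof (induction M)
  case (add x M)
  have "l1_norm (\<Prod>z\<in>#add_mset x M. p z) \<le> l1_norm (p x) * l1_norm (\<Prod>z\<in>#M. p z)"
    using l1_norm_mult_le by simp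
  also have "\<dots> \<le> a * a ^ size M"
    using add by (intro mult_mono) (auto intro: l1_norm_nonneg order_trans[OF l1_norm_nonneg])
  finally show ?case by simp
qed simp

lemma l1_norm_prod_mset_add_diff_le:
  assumes "\<forall>z\<in>#M. l1_norm (p z) \<le> a \<and> l1_norm (q z) \<le> b"
  shows "l1_norm ((\<Prod>z\<in>#M. p z + q z) - (\<Prod>z\<in>#M. p z)) \<le> (a + b) ^ size M - a ^ size M"
  using assms
proof (induction M)
  case (add x M)
  define A where "A = (\<Prod>z\<in>#M. p z + q z)"
  define B where "B = (\<Prod>z\<in>#M. p z)"
  have x: "l1_norm (p x) \<le> a" "l1_norm (q x) \<le> b" and IH: "l1_norm (A - B) \<le> (a + b) ^ size M - a ^ size M"
    using add by (auto simp: A_def B_def)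
  have "l1_norm A \<le> l1_norm (A - B) + l1_norm B"
    using l1_norm_add_le[of "A - B" B] by simp
  also have "\<dots> \<le> (a + b) ^ size M"
    using IH l1_norm_prod_mset_le[of M p a] add.prems by (simp add: B_def)
  finally have A: "l1_norm A \<le> (a + b) ^ size M" .
  have "(p x + q x) * A - p x * B = p x * (A - B) + q x * A"
    by (simp add: algebra_simps)
  then have "l1_norm ((p x + q x) * A - p x * B) \<le> l1_norm (p x * (A - B)) + l1_norm (q x * A)"
    using l1_norm_add_le by simp
  also have "\<dots> \<le> l1_norm (p x) * l1_norm (A - B) + l1_norm (q x) * l1_norm A"
    by (intro add_mono l1_norm_mult_le)
  also have "\<dots> \<le> a * ((a + b) ^ size M - a ^ size M) + b * (a + b) ^ size M"
    using x IH A by (intro add_mono mult_mono) (auto intro: l1_norm_nonneg order_trans[OF l1_norm_nonneg])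
  also have "\<dots> = (a + b) ^ size (add_mset x M) - a ^ size (add_mset x M)"
    by (simp add: algebra_simps)
  finally show ?case by (simp add: A_def B_def)
qed simp

lemma l1_norm_prod_linear_factors_diff_monom_le:
  assumes "\<forall>z\<in>#M. norm z \<le> e"
  shows "l1_norm ((\<Prod>z\<in>#M. [:-z, 1:]) - monom 1 (size M)) \<le> (1 + e) ^ size M - 1"
proof -
  have "\<forall>z\<in>#M. l1_norm [:0, 1:] \<le> 1 \<and> l1_norm [:-z:] \<le> e"
    using assms by (simp add: l1_norm_pCons)
  from l1_norm_prod_mset_add_diff_le[OF this] show ?thesis
    by (simp add: monom_altdef add.commute)
qed

lemma l1_norm_prod_reversed_linear_factors_diff_one_le:
  assumes "\<forall>z\<in>#M. norm (f z) \<le> d"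
  shows "l1_norm ((\<Prod>z\<in>#M. [:1, f z:]) - 1) \<le> (1 + d) ^ size M - 1"
proof -
  have "\<forall>z\<in>#M. l1_norm 1 \<le> 1 \<and> l1_norm [:0, f z:] \<le> d"
    using assms by (simp add: l1_norm_pCons)
  moreover have "1 + [:0, f z:] = [:1, f z:]" for z
    by (simp add: one_pCons)
  ultimately show ?thesis
    using l1_norm_prod_mset_add_diff_le[of M "\<lambda>_. 1" 1 "\<lambda>z. [:0, f z:]" d] by simp
qed

lemma prod_mset_linear_factors_monic:
  fixes M :: "'a::field multiset"
  shows "degree (\<Prod>z\<in>#M. [:-z, 1:]) = size M \<and> lead_coeff (\<Prod>z\<in>#M. [:-z, 1:]) = 1"
proof (induction M)
  case (add x M)
  let ?P = "\<Prod>z\<in>#M. [:-z, 1:]"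
  have degP: "degree ?P = size M" and lcP: "lead_coeff ?P = 1"
    using add.IH by auto
  then have "?P \<noteq> 0"
    by auto
  then have "degree ([:-x, 1:] * ?P) = Suc (degree ?P)"
    by (subst degree_mult_eq) auto
  moreover have "lead_coeff ([:-x, 1:] * ?P) = 1"
    unfolding lead_coeff_mult lcP by simp
  ultimately show ?case
    using degP by (simp del: mult_pCons_left lead_coeff_mult)
qed simp

lemma coeff_prod_mset_linear_factors_size:
  fixes M :: "'a::field multiset"
  shows "coeff (\<Prod>z\<in>#M. [:-z, 1:]) (size M) = 1"
  using prod_mset_linear_factors_monic[of M] by (metis)

lemma coeff_0_prod_mset_reversed_linear_factors:
  "coeff (\<Prod>z\<in>#M. [:1, f z:]) 0 = (1 :: 'a::comm_ring_1)"
proof -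
  have "poly (\<Prod>z\<in>#M. [:1, f z:]) 0 = 1"
    by (simp add: poly_prod_mset)
  then show ?thesis
    by (simp add: poly_0_coeff_0)
qed

lemma prod_mset_linear_factors_reciprocal:
  fixes M :: "'a::field multiset"
  assumes "0 \<notin># M"
  shows "(\<Prod>z\<in>#M. [:-z, 1:]) = smult (\<Prod>z\<in>#M. -z) (\<Prod>z\<in>#M. [:1, -1/z:])"
  using assms
proof (induction M)
  case (add x M)
  then have "[:-x, 1:] = smult (-x) [:1, -1/x:]"
    by simp
  with add have "[:-x, 1:] * (\<Prod>z\<in>#M. [:-z, 1:])
      = smult (-x) [:1, -1/x:] * smult (\<Prod>z\<in>#M. -z) (\<Prod>z\<in>#M. [:1, -1/z:])"
    by simp
  then show ?case
    by (simp only: image_mset_add_mset prod_mset.add_mset mult_smult_left mult_smult_right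
        smult_smult mult.commute)
qed simp

lemma higher_pderiv_pcompose_linear:
  "(pderiv ^^ i) (pcompose F [:m, c:]) = smult (c ^ i) (pcompose ((pderiv ^^ i) F) [:m, c:])"
  by (induction i) (simp_all add: pderiv_pcompose pderiv_smult pderiv_pCons mult.commute)

lemma coeff_pcompose_linear_taylor:
  fixes F :: "'a::field_char_0 poly"
  shows "coeff (pcompose F [:m, c:]) i = poly ((pderiv ^^ i) F) m * c ^ i / fact i"
proof -
  let ?H = "pcompose F [:m, c:]"
  have "fact i * coeff ?H i = coeff ((pderiv ^^ i) ?H) 0"
    using coeff_higher_pderiv[of i ?H 0] by (simp add: pochhammer_fact)
  also have "\<dots> = c ^ i * poly ((pderiv ^^ i) F) m"
    by (simp add: higher_pderiv_pcompose_linear poly_0_coeff_0[symmetric] poly_pcompose)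
  finally show ?thesis
    by (simp add: field_simps)
qed

lemma one_plus_power_le:
  fixes x :: real
  assumes "0 \<le> x" "real s * x \<le> 1/2"
  shows "(1 + x) ^ s \<le> 1 + 2 * real s * x"
  using assms(2)
proof (induction s)
  case (Suc s)
  have sx: "real s * x \<le> 1/2"
    using Suc.prems assms(1) by (simp add: algebra_simps)
  have "(1 + x) ^ Suc s \<le> (1 + x) * (1 + 2 * real s * x)"
    using Suc.IH[OF sx] assms(1) by (simp add: mult_left_mono)
  also have "\<dots> = 1 + (2 * real s + 1) * x + 2 * (real s * x) * x"
    by (simp add: algebra_simps)
  also have "\<dots> \<le> 1 + 2 * real (Suc s) * x"
    using sx assms(1) mult_right_mono[of "2 * (real s * x)" 1 x] by (simp add: algebra_simps)
  finally show ?case .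
qed simp

lemma one_plus_power_minus_one_le:
  fixes x :: real
  assumes "0 \<le> x" "real s * x \<le> 1/16"
  shows "(1 + x) ^ s - 1 \<le> 1/8"
  using one_plus_power_le[of x s] assms by simp

lemma coeff_dominates_near_monom_mult:
  fixes A B :: "'a::real_normed_field poly"
  assumes "coeff A k = 1" "coeff B 0 = 1"
    and A: "l1_norm (A - monom 1 k) \<le> 1/8" and B: "l1_norm (B - 1) \<le> 1/8" and "finite I"
  shows "3/2 * (\<Sum>i\<in>I - {k}. norm (coeff (A * B) i)) < norm (coeff (A * B) k)"
proof -
  define P where "P = A - monom 1 k"
  define Q where "Q = B - 1"
  define E where "E = monom 1 k * Q + P + P * Q"
  have AB: "A * B = monom 1 k + E"
    by (simp add: P_def Q_def E_def algebra_simps)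
  have PQ: "l1_norm P * l1_norm Q \<le> 1/64"
    using mult_mono[OF A B] l1_norm_nonneg[of "B - 1"] by (simp add: P_def Q_def)
  have "coeff E k = coeff (P * Q) k"
    using assms(1,2) coeff_monom_mult[of 1 k Q k] by (simp add: P_def Q_def E_def)
  then have "norm (coeff E k) \<le> l1_norm P * l1_norm Q"
    using norm_coeff_le_l1_norm[of "P * Q" k] l1_norm_mult_le[of P Q] by simp
  then have lead: "1 - l1_norm P * l1_norm Q \<le> norm (coeff (A * B) k)"
    using norm_triangle_ineq2[of 1 "- coeff E k"] by (simp add: AB)
  have "(\<Sum>i\<in>I - {k}. norm (coeff (A * B) i)) = (\<Sum>i\<in>I - {k}. norm (coeff E i))"
    by (intro sum.cong) (auto simp: AB coeff_monom)
  also have "\<dots> \<le> l1_norm E"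
    using \<open>finite I\<close> by (intro sum_norm_coeff_le_l1_norm) simp
  also have "\<dots> \<le> l1_norm (monom 1 k * Q) + l1_norm P + l1_norm (P * Q)"
    unfolding E_def by (meson add_mono l1_norm_add_le order_refl order_trans)
  also have "\<dots> \<le> l1_norm Q + l1_norm P + l1_norm P * l1_norm Q"
    using l1_norm_mult_le[of "monom 1 k" Q] l1_norm_mult_le[of P Q] by simp
  finally show ?thesis
    using lead PQ A B unfolding P_def Q_def by linarith
qed

lemma pcompose_prod_mset: "pcompose (\<Prod>z\<in>#M. p z) q = (\<Prod>z\<in>#M. pcompose (p z) q)"
  by (induction M) (simp_all add: pcompose_1 pcompose_mult)

lemma prod_mset_smult: "(\<Prod>z\<in>#M. smult c (p z)) = smult (c ^ size M) (\<Prod>z\<in>#M. p z)"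
  by (induction M) (simp_all add: mult_ac)

lemma pcompose_linear_eq_prod_roots:
  fixes F :: "complex poly"
  assumes "c \<noteq> 0"
  shows "pcompose F [:m, c:] = smult (lead_coeff F * c ^ degree F) (\<Prod>z\<in>#proots F. [:-((z - m) / c), 1:])"
proof -
  have "pcompose F [:m, c:] = smult (lead_coeff F) (\<Prod>z\<in>#proots F. pcompose [:-z, 1:] [:m, c:])"
    by (subst (1) complex_poly_decompose_multiset[symmetric])
      (simp only: pcompose_smult pcompose_prod_mset)
  also have "(\<Prod>z\<in>#proots F. pcompose [:-z, 1:] [:m, c:]) = (\<Prod>z\<in>#proots F. smult c [:-((z - m) / c), 1:])"
    using assms by (intro arg_cong[of _ _ prod_mset] image_mset_cong) (simp add: pcompose_pCons field_simps)
  also have "\<dots> = smult (c ^ degree F) (\<Prod>z\<in>#proots F. [:-((z - m) / c), 1:])"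
    by (simp only: prod_mset_smult size_proots_complex)
  finally show ?thesis
    by simp
qed

lemma size_proots_within_eq_root_count:
  assumes "F \<noteq> 0"
  shows "size (filter_mset (\<lambda>z. z \<in> A) (proots F)) = root_count F A"
proof -
  let ?R = "filter_mset (\<lambda>z. z \<in> A) (proots F)"
  have "size ?R = (\<Sum>z\<in>set_mset ?R. count ?R z)"
    by (rule size_multiset_overloaded_eq)
  also have "\<dots> = root_count F A"
    unfolding root_count_def using assms by (intro sum.cong) auto
  finally show ?thesis .
qed

lemma pcompose_linear_split_roots:
  fixes F :: "complex poly" and m c :: complex and X :: "complex \<Rightarrow> bool"
  defines "W \<equiv> image_mset (\<lambda>z. (z - m) / c) (proots F)"
  assumes "c \<noteq> 0" and "0 \<notin># {#u \<in># W. \<not> X u#}"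
  shows "pcompose F [:m, c:] = smult (lead_coeff F * c ^ degree F * (\<Prod>u\<in>#{#u \<in># W. \<not> X u#}. -u))
           ((\<Prod>u\<in>#{#u \<in># W. X u#}. [:-u, 1:]) * (\<Prod>u\<in>#{#u \<in># W. \<not> X u#}. [:1, -1/u:]))"
proof -
  have "pcompose F [:m, c:] = smult (lead_coeff F * c ^ degree F) (\<Prod>u\<in>#W. [:-u, 1:])"
    using pcompose_linear_eq_prod_roots[OF \<open>c \<noteq> 0\<close>]
    by (simp add: W_def image_mset.compositionality comp_def)
  also have "(\<Prod>u\<in>#W. [:-u, 1:])
      = (\<Prod>u\<in>#{#u \<in># W. X u#}. [:-u, 1:]) * (\<Prod>u\<in>#{#u \<in># W. \<not> X u#}. [:-u, 1:])"
    by (subst (1) multiset_partition[of W X]) (simp only: image_mset_union prod_mset.union)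
  finally show ?thesis
    using prod_mset_linear_factors_reciprocal[OF assms(3)]
    by (simp add: mult_smult_right mult.assoc)
qed

lemma isolating_normalized_roots:
  fixes F :: "complex poly" and m :: complex and r :: real
  assumes "isolating \<rho>1 \<rho>2 F m r k" and "F \<noteq> 0" "r > 0"
  defines "W \<equiv> image_mset (\<lambda>z. (z - m) / of_real r) (proots F)"
  shows "size {#u \<in># W. norm u < \<rho>1#} = k" and "\<forall>u\<in>#W. norm u < \<rho>1 \<or> \<rho>2 \<le> norm u"
proof -
  have ball: "dist m z < \<rho> * r \<longleftrightarrow> norm ((z - m) / of_real r) < \<rho>" for z \<rho>
    using \<open>r > 0\<close> by (simp add: dist_norm norm_minus_commute norm_divide divide_less_eq)
  have "size {#u \<in># W. norm u < \<rho>1#} = size {#z \<in># proots F. z \<in> ball m (\<rho>1 * r)#}"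
    by (simp add: W_def filter_mset_image_mset ball[symmetric])
  also have "\<dots> = k"
    using assms(1) size_proots_within_eq_root_count[OF \<open>F \<noteq> 0\<close>, of "ball m (\<rho>1 * r)"]
    by (simp add: isolating_def)
  finally show "size {#u \<in># W. norm u < \<rho>1#} = k" .
  show "\<forall>u\<in>#W. norm u < \<rho>1 \<or> \<rho>2 \<le> norm u"
  proof
    fix u assume "u \<in># W"
    then obtain z where "u = (z - m) / of_real r" "poly F z = 0"
      using \<open>F \<noteq> 0\<close> by (auto simp: W_def)
    with assms(1) have "z \<in> ball m (\<rho>1 * r) \<or> z \<notin> ball m (\<rho>2 * r)"
      unfolding isolating_def by blast
    then have "norm u < \<rho>1 \<or> \<not> norm u < \<rho>2"
      unfolding mem_ball ball \<open>u = (z - m) / of_real r\<close> .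
    then show "norm u < \<rho>1 \<or> \<rho>2 \<le> norm u"
      by linarith
  qed
qed

lemma T_test_if_pcompose_near_monom_mult:
  fixes F :: "complex poly"
  assumes "pcompose F [:m, of_real r:] = smult C (A * B)" and "C \<noteq> 0"
    and "coeff A k = 1" "coeff B 0 = 1" "l1_norm (A - monom 1 k) \<le> 1/8" "l1_norm (B - 1) \<le> 1/8"
  shows "T_test k m r (3/2) F"
proof -
  have taylor: "poly ((pderiv ^^ i) F) m * of_real (r ^ i) / of_nat (fact i) = C * coeff (A * B) i" for i
    using coeff_pcompose_linear_taylor[of F m "of_real r" i] assms(1) by simp
  have "3/2 * (\<Sum>i\<in>{0..degree F} - {k}. norm (coeff (A * B) i)) < norm (coeff (A * B) k)"
    using coeff_dominates_near_monom_mult[OF assms(3-6)] by simp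
  then have "norm C * (3/2 * (\<Sum>i\<in>{0..degree F} - {k}. norm (coeff (A * B) i)))
      < norm C * norm (coeff (A * B) k)"
    using \<open>C \<noteq> 0\<close> by simp
  then show ?thesis
    unfolding T_test_def taylor norm_mult sum_distrib_left[symmetric] by (simp add: algebra_simps)
qed

lemma T_test_if_isolating:
  fixes F :: "complex poly"
  assumes iso: "isolating \<rho>1 \<rho>2 F m r k" and "F \<noteq> 0" "r > 0" "0 < \<rho>1" "\<rho>1 \<le> \<rho>2"
    and inner: "real (degree F) * \<rho>1 \<le> 1/16" and outer: "16 * real (degree F) \<le> \<rho>2"
  shows "T_test k m r (3/2) F"
proof -
  define W where "W = image_mset (\<lambda>z. (z - m) / of_real r) (proots F)"
  define WS where "WS = {#u \<in># W. norm u < \<rho>1#}"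
  define WL where "WL = {#u \<in># W. \<not> norm u < \<rho>1#}"
  have "size WS = k" and separated: "\<forall>u\<in>#W. norm u < \<rho>1 \<or> \<rho>2 \<le> norm u"
    using isolating_normalized_roots[OF iso \<open>F \<noteq> 0\<close> \<open>r > 0\<close>] by (simp_all add: W_def WS_def)
  moreover have "size WS + size WL = degree F"
    by (metis W_def WL_def WS_def multiset_partition size_image_mset size_proots_complex size_union)
  ultimately have "real k \<le> real (degree F)" "real (size WL) \<le> real (degree F)"
    by simp_all
  then have "real k * \<rho>1 \<le> 1/16" and "16 * real (size WL) \<le> \<rho>2"
    using inner outer mult_right_mono[of "real k" "real (degree F)" \<rho>1] \<open>0 < \<rho>1\<close> by linarith+
  moreover have "0 < \<rho>2"
    using assms(4,5) by linarith
  ultimately have sizes: "real k * \<rho>1 \<le> 1/16" "real (size WL) * (1 / \<rho>2) \<le> 1/16"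
    by (simp_all add: field_simps)
  have WL_large: "\<forall>u\<in>#WL. \<rho>2 \<le> norm u"
    using separated by (auto simp: WL_def)
  then have "0 \<notin># WL"
    using \<open>0 < \<rho>2\<close> by fastforce
  then have "pcompose F [:m, of_real r:] = smult (lead_coeff F * of_real r ^ degree F * (\<Prod>u\<in>#WL. -u))
      ((\<Prod>u\<in>#WS. [:-u, 1:]) * (\<Prod>u\<in>#WL. [:1, -1/u:]))"
    using pcompose_linear_split_roots[of "of_real r" "\<lambda>u. norm u < \<rho>1"] \<open>r > 0\<close>
    by (simp add: W_def WS_def WL_def)
  moreover have "lead_coeff F * of_real r ^ degree F * (\<Prod>u\<in>#WL. -u) \<noteq> 0"
    using \<open>F \<noteq> 0\<close> \<open>r > 0\<close> \<open>0 \<notin># WL\<close> by auto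
  moreover have "coeff (\<Prod>u\<in>#WS. [:-u, 1:]) k = 1"
    using coeff_prod_mset_linear_factors_size[of WS] \<open>size WS = k\<close> by simp
  moreover have "coeff (\<Prod>u\<in>#WL. [:1, -1/u:]) 0 = 1"
    by (rule coeff_0_prod_mset_reversed_linear_factors)
  moreover have "l1_norm ((\<Prod>u\<in>#WS. [:-u, 1:]) - monom 1 k) \<le> (1 + \<rho>1) ^ k - 1"
    using l1_norm_prod_linear_factors_diff_monom_le[of WS \<rho>1] \<open>size WS = k\<close> by (simp add: WS_def)
  then have "l1_norm ((\<Prod>u\<in>#WS. [:-u, 1:]) - monom 1 k) \<le> 1/8"
    using one_plus_power_minus_one_le[of \<rho>1 k] sizes \<open>0 < \<rho>1\<close> by simp
  moreover have "l1_norm ((\<Prod>u\<in>#WL. [:1, -1/u:]) - 1) \<le> (1 + 1 / \<rho>2) ^ size WL - 1"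
    using WL_large \<open>0 < \<rho>2\<close>
    by (intro l1_norm_prod_reversed_linear_factors_diff_one_le) (auto simp: norm_divide intro: frac_le)
  then have "l1_norm ((\<Prod>u\<in>#WL. [:1, -1/u:]) - 1) \<le> 1/8"
    using one_plus_power_minus_one_le[of "1 / \<rho>2" "size WL"] sizes \<open>0 < \<rho>2\<close> by simp
  ultimately show ?thesis
    by (rule T_test_if_pcompose_near_monom_mult)
qed

theorem corollary3p3:
  fixes F :: "complex poly" and m :: complex and r :: real and k n :: nat
  assumes "degree F = n" and "n \<ge> 2" and "r > 0"
    and "isolating (1 / (16 * real n)) (16 * real n ^ 4) F m r k"
  shows "T_test k m r (3/2) F"
proof (rule T_test_if_isolating)
  have n: "1 \<le> real n" "real n \<le> real n ^ 4"
    using \<open>n \<ge> 2\<close> by (simp_all add: self_le_power)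
  moreover have "1 \<le> real n ^ 4"
    using n(1) by (rule one_le_power)
  ultimately show "1 / (16 * real n) \<le> 16 * real n ^ 4"
    by (smt (verit) divide_le_eq_1)
  show "16 * real (degree F) \<le> 16 * real n ^ 4"
    using n \<open>degree F = n\<close> by simp
  show "real (degree F) * (1 / (16 * real n)) \<le> 1/16"
    using n \<open>degree F = n\<close> by simp
  show "F \<noteq> 0"
    using assms(1,2) by auto
qed (use assms in auto)

end
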